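(* Let $T\in\mathbb{N}$, $\Delta t>0$, $r\in\mathbb{R}$, $\mu\in\mathbb{R}$, $\sigma>0$, $S_0>0$, $B>0$ and $c\in\mathbb{R}$. Let $S_{j+1}=S_j\exp((\mu-\frac{\sigma^2}{2})\Delta t+\sigma\sqrt{\Delta t}Z_j)$, $j=0,\dots,T-1$, with $Z_j$ i.i.d. standard normal, and let the digital knock-up-in payoff be $$V(S_1,\dots,S_T)=\begin{cases}c&\text{if }\max_{j=1,\dots,T}S_j\ge B,\\0&\text{otherwise,}\end{cases}$$ with present value $PV_{t_0}(S_0)=e^{-rT\Delta t}\mathbb{E}(V(S_1,\dots,S_T))$. For $u=(u^{(1)},\dots,u^{(T)})\in[0,1]^T$ define recursively $S_0(u)=S_0$ and, for $t=0,\dots,T-1$, $$p_t=\Phi\left(\frac{\log(B/S_t(u))-(\mu-\frac{\sigma^2}{2})\Delta t}{\sigma\sqrt{\Delta t}}\right),\qquad S_{t+1}(u)=S_t(u)\exp\Big(\big(\mu-\tfrac{\sigma^2}{2}\big)\Delta t+\sigma\sqrt{\Delta t}\,\Phi^{-1}(p_t u^{(t+1)})\Big).$$ Then $$PV_{t_0}(S_0)=e^{-rT\Delta t}\int_0^1\cdots\int_0^1 c\Big((1-p_0)+p_0(1-p_1)+\dots+p_0\cdots p_{T-2}(1-p_{T-1})\Big)\,\mathrm{d}u^{(T)}\cdots\mathrm{d}u^{(1)}.$$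
   Context: $\Phi$ is the standard normal cumulative distribution function and $\Phi^{-1}$ its inverse. Observation dates are equidistant with spacing $\Delta t$, so $t_T-t_0=T\Delta t$; $\mu=r-b$ with $b$ the dividend yield. *)

theory Defs
  imports "HOL-Probability.Probability"
begin

definition Phi :: "real \<Rightarrow> real" where
  "Phi x = measure (density lborel (\<lambda>t. ennreal (std_normal_density t))) {..x}"

definition Phi_inv :: "real \<Rightarrow> real" where
  "Phi_inv y = inv_into UNIV Phi y"

fun S_path :: "real \<Rightarrow> real \<Rightarrow> real \<Rightarrow> real \<Rightarrow> (nat \<Rightarrow> real) \<Rightarrow> nat \<Rightarrow> real" where
  "S_path S0 mu sig dt z 0 = S0"
| "S_path S0 mu sig dt z (Suc j) =
     S_path S0 mu sig dt z j * exp ((mu - sig\<^sup>2 / 2) * dt + sig * sqrt dt * z j)"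

definition knock_in_payoff :: "nat \<Rightarrow> real \<Rightarrow> real \<Rightarrow> (nat \<Rightarrow> real) \<Rightarrow> real" where
  "knock_in_payoff T B c S = (if \<exists>j\<in>{1..T}. S j \<ge> B then c else 0)"

fun S_cond :: "real \<Rightarrow> real \<Rightarrow> real \<Rightarrow> real \<Rightarrow> real \<Rightarrow> (nat \<Rightarrow> real) \<Rightarrow> nat \<Rightarrow> real" where
  "S_cond S0 mu sig dt B u 0 = S0"
| "S_cond S0 mu sig dt B u (Suc t) =
     (let St = S_cond S0 mu sig dt B u t;
          pt = Phi ((ln (B / St) - (mu - sig\<^sup>2 / 2) * dt) / (sig * sqrt dt))
      in St * exp ((mu - sig\<^sup>2 / 2) * dt + sig * sqrt dt * Phi_inv (pt * u (Suc t))))"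

definition p_cond :: "real \<Rightarrow> real \<Rightarrow> real \<Rightarrow> real \<Rightarrow> real \<Rightarrow> (nat \<Rightarrow> real) \<Rightarrow> nat \<Rightarrow> real" where
  "p_cond S0 mu sig dt B u t =
     Phi ((ln (B / S_cond S0 mu sig dt B u t) - (mu - sig\<^sup>2 / 2) * dt) / (sig * sqrt dt))"

end

theory Submission
  imports Defs
begin

text \<open>
  The payoff is c unless the path stays below the barrier at all T dates, so everything reduces to
  the survival probability. Given the current price s, the next price stays below B iff the normal
  increment is below the standardized log-distance \<open>\<theta>(s) = (ln (B/s) - (mu - sig\<^sup>2/2) dt) / (sig \<surd>dt)\<close>,
  which happens with probability \<open>p = Phi \<theta>(s)\<close>; conditioned on this event, the increment has
  the law of \<open>Phi_inv (p U)\<close> with U uniform on [0,1] (inverse transform sampling of the truncated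
  normal). Applying this one step at a time turns the survival probability into the integral of
  \<open>p\<^sub>0 \<cdots> p\<^sub>T\<^sub>-\<^sub>1\<close> over the unit cube, and
  \<open>\<Sum>\<^sub>k p\<^sub>0 \<cdots> p\<^sub>k\<^sub>-\<^sub>1 (1 - p\<^sub>k) = 1 - p\<^sub>0 \<cdots> p\<^sub>T\<^sub>-\<^sub>1\<close> telescopes.
\<close>

section \<open>The standard normal distribution function\<close>

abbreviation std_normal :: "real measure" where
  "std_normal \<equiv> density lborel (\<lambda>t. ennreal (std_normal_density t))"

lemma prob_space_std_normal: "prob_space std_normal"
  using prob_space_normal_density[of 1 0] by simp

interpretation std_normal: real_distribution std_normal
  by (simp add: real_distribution_def real_distribution_axioms_def prob_space_std_normal)

lemma Phi_eq_cdf: "Phi = cdf std_normal"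
  by (simp add: fun_eq_iff Phi_def cdf_def)

lemma emeasure_std_normal_Ioc_pos:
  assumes "x < y" shows "emeasure std_normal {x<..y} > 0"
proof (rule ccontr)
  assume "\<not> ?thesis"
  then have "(\<integral>\<^sup>+ t. ennreal (std_normal_density t) * indicator {x<..y} t \<partial>lborel) = 0"
    by (simp add: emeasure_density)
  then have "AE t in lborel. ennreal (std_normal_density t) * indicator {x<..y} t = 0"
    by (simp add: nn_integral_0_iff_AE)
  then have "AE t in lborel. t \<notin> {x<..y}"
    by (rule AE_mp) (auto simp: std_normal_density_def split: split_indicator)
  then have "{x<..y} \<in> null_sets lborel"
    using AE_iff_null_sets[of "{x<..y}" lborel] by simp
  then show False using assms by (simp add: null_sets_def)
qed

lemma Phi_strict_mono: "strict_mono Phi"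
proof
  fix x y :: real assume "x < y"
  then have "Phi y - Phi x = measure std_normal {x<..y}"
    by (simp add: Phi_eq_cdf std_normal.cdf_diff_eq)
  also have "\<dots> > 0"
    using emeasure_std_normal_Ioc_pos[OF \<open>x < y\<close>] by (simp add: std_normal.emeasure_eq_measure)
  finally show "Phi x < Phi y" by simp
qed

lemma Phi_less_iff [simp]: "Phi x < Phi y \<longleftrightarrow> x < y"
  by (rule strict_mono_less[OF Phi_strict_mono])

lemma Phi_le_iff [simp]: "Phi x \<le> Phi y \<longleftrightarrow> x \<le> y"
  by (rule strict_mono_less_eq[OF Phi_strict_mono])

lemma Phi_pos: "0 < Phi x"
  using Phi_less_iff[of "x - 1" x] std_normal.cdf_nonneg[of "x - 1"] by (simp add: Phi_eq_cdf)

lemma Phi_less_1: "Phi x < 1"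
  using Phi_less_iff[of x "x + 1"] std_normal.cdf_bounded_prob[of "x + 1"] by (simp add: Phi_eq_cdf)

lemma measure_std_normal_singleton: "measure std_normal {x} = 0"
proof -
  have "AE t in lborel. t \<noteq> x"
    using AE_not_in[OF countable_imp_null_set_lborel[of "{x}"]] by simp
  then have "AE t in lborel. t \<in> {x} \<longrightarrow> ennreal (std_normal_density t) = 0"
    by eventually_elim simp
  then have "{x} \<in> null_sets std_normal"
    by (simp add: null_sets_density_iff)
  then show ?thesis by (simp add: measure_def null_setsD1)
qed

lemma measure_std_normal_lessThan: "measure std_normal {..<x} = Phi x"
proof -
  have "{..x} = {..<x} \<union> {x}" by auto
  then show ?thesis
    using std_normal.finite_measure_Union[of "{..<x}" "{x}"] measure_std_normal_singleton[of x]
    by (simp add: Phi_def)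
qed

lemma isCont_Phi: "isCont Phi x"
  unfolding Phi_eq_cdf by (simp add: std_normal.isCont_cdf measure_std_normal_singleton)

lemma Phi_surj:
  assumes "0 < v" "v < 1" shows "\<exists>x. Phi x = v"
proof -
  have "eventually (\<lambda>x. Phi x < v) at_bot"
    using order_tendstoD(2)[OF std_normal.cdf_lim_at_bot assms(1)] by (simp add: Phi_eq_cdf)
  then obtain a where a: "Phi a < v"
    unfolding eventually_at_bot_linorder by (meson order_refl)
  have "eventually (\<lambda>x. v < Phi x) at_top"
    using order_tendstoD(1)[OF std_normal.cdf_lim_at_top_prob assms(2)] by (simp add: Phi_eq_cdf)
  then obtain b where b: "v < Phi b"
    unfolding eventually_at_top_linorder by (meson order_refl)
  have "Phi a < Phi b"
    using a b by linarith
  then have "a \<le> b" by simp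
  then show ?thesis
    using IVT[of Phi a v b] a b isCont_Phi by (auto simp del: Phi_le_iff Phi_less_iff)
qed

lemma Phi_Phi_inv:
  assumes "0 < v" "v < 1" shows "Phi (Phi_inv v) = v"
  unfolding Phi_inv_def using Phi_surj[OF assms] by (auto intro: f_inv_into_f)

lemma Phi_inv_le_iff:
  assumes "0 < v" "v < 1" shows "Phi_inv v \<le> x \<longleftrightarrow> v \<le> Phi x"
  using Phi_le_iff[of "Phi_inv v" x] by (simp add: Phi_Phi_inv[OF assms])

lemma Phi_inv_outside:
  assumes "v \<notin> {0<..<1}" shows "Phi_inv v = Phi_inv 0"
proof -
  have "Phi y \<noteq> v" "Phi y \<noteq> 0" for y
    using assms Phi_pos[of y] Phi_less_1[of y] by auto
  then have "(\<lambda>y. Phi y = v) = (\<lambda>y. Phi y = 0)" by auto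
  then show ?thesis by (simp add: Phi_inv_def inv_into_def)
qed

lemma borel_measurable_Phi [measurable]: "Phi \<in> borel_measurable borel"
  by (intro borel_measurable_mono strict_mono_mono Phi_strict_mono)

lemma borel_measurable_Phi_inv [measurable]: "Phi_inv \<in> borel_measurable borel"
  unfolding borel_measurable_iff_le
proof
  fix x
  have "{v \<in> space borel. Phi_inv v \<le> x} =
      {0<..<1} \<inter> {..Phi x} \<union> (if Phi_inv 0 \<le> x then - {0<..<1} else {})"
  proof (intro set_eqI)
    fix v show "v \<in> {v \<in> space borel. Phi_inv v \<le> x} \<longleftrightarrow>
        v \<in> {0<..<1} \<inter> {..Phi x} \<union> (if Phi_inv 0 \<le> x then - {0<..<1} else {})"
      using Phi_inv_le_iff[of v x] Phi_inv_outside[of v] by (cases "v \<in> {0<..<1}") auto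
  qed
  also have "\<dots> \<in> sets borel" by auto
  finally show "{v \<in> space borel. Phi_inv v \<le> x} \<in> sets borel" .
qed

section \<open>Inverse transform sampling of the truncated normal\<close>

abbreviation unif01 :: "real measure" where
  "unif01 \<equiv> uniform_measure lborel {0..1}"

lemma prob_space_unif01: "prob_space unif01"
  by (rule prob_space_uniform_measure) auto

interpretation unif01: prob_space unif01
  by (rule prob_space_unif01)

lemma measure_std_normal_lessThan_Int_atMost:
  "measure std_normal ({..<\<theta>} \<inter> {..x}) = min (Phi \<theta>) (Phi x)"
proof (cases "x < \<theta>")
  case True
  then have "{..<\<theta>} \<inter> {..x} = {..x}" by auto
  moreover have "measure std_normal {..x} = Phi x" by (simp add: Phi_def)
  ultimately show ?thesis using True by (simp add: min_def)
next
  case False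
  then have "{..<\<theta>} \<inter> {..x} = {..<\<theta>}" by auto
  then show ?thesis using False by (simp add: measure_std_normal_lessThan)
qed

lemma measure_unif01_Phi_inv_le:
  "measure unif01 {v. Phi_inv (Phi \<theta> * v) \<le> x} = min 1 (Phi x / Phi \<theta>)"
proof -
  define p where "p = Phi \<theta>"
  have p: "0 < p" "p < 1" unfolding p_def by (simp_all add: Phi_pos Phi_less_1)
  define A where "A = {0..1} \<inter> {v. Phi_inv (p * v) \<le> x}"
  have "A \<in> sets borel" unfolding A_def by measurable
  \<comment> \<open>\<open>Phi_inv 0\<close> is an unspecified junk value, so the point \<open>v = 0\<close> has to be discarded.\<close>
  then have "measure lborel A = measure lborel (A - {0})"
    by (simp add: measure_Diff_null_set countable_imp_null_set_lborel)
  also have "A - {0} = {0<..min 1 (Phi x / p)}"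
  proof (intro set_eqI)
    fix v
    show "v \<in> A - {0} \<longleftrightarrow> v \<in> {0<..min 1 (Phi x / p)}"
    proof (cases "0 < v \<and> v \<le> 1")
      case True
      have "p * v \<le> p"
        using True p by (simp add: mult_left_le)
      then have "p * v < 1"
        using p by linarith
      moreover have "0 < p * v"
        using True p by simp
      ultimately show ?thesis
        using True p by (simp add: A_def Phi_inv_le_iff field_simps)
    qed (auto simp: A_def)
  qed
  finally have "measure lborel A = min 1 (Phi x / p)"
    using p by (simp add: Phi_pos less_imp_le)
  then show ?thesis by (simp add: A_def p_def)
qed

theorem distr_Phi_inv_unif01:
  "distr unif01 borel (\<lambda>v. Phi_inv (Phi \<theta> * v)) = uniform_measure std_normal {..<\<theta>}"
proof (rule cdf_unique)
  show "real_distribution (distr unif01 borel (\<lambda>v. Phi_inv (Phi \<theta> * v)))"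
    by (auto simp: real_distribution_def real_distribution_axioms_def intro!: unif01.prob_space_distr)
  have "emeasure std_normal {..<\<theta>} = ennreal (Phi \<theta>)"
    by (simp add: std_normal.emeasure_eq_measure measure_std_normal_lessThan)
  then show "real_distribution (uniform_measure std_normal {..<\<theta>})"
    using Phi_pos[of \<theta>] by (auto simp: real_distribution_def real_distribution_axioms_def
        intro!: prob_space_uniform_measure)
  show "cdf (distr unif01 borel (\<lambda>v. Phi_inv (Phi \<theta> * v))) = cdf (uniform_measure std_normal {..<\<theta>})"
  proof
    fix x
    have "cdf (distr unif01 borel (\<lambda>v. Phi_inv (Phi \<theta> * v))) x = min 1 (Phi x / Phi \<theta>)"
      by (simp add: cdf_def measure_distr vimage_def measure_unif01_Phi_inv_le)
    also have "\<dots> = min (Phi \<theta>) (Phi x) / Phi \<theta>"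
      using Phi_pos[of \<theta>] by (auto simp: min_def field_simps)
    also have "\<dots> = cdf (uniform_measure std_normal {..<\<theta>}) x"
      using \<open>emeasure std_normal {..<\<theta>} = ennreal (Phi \<theta>)\<close> Phi_pos[of \<theta>]
      by (simp add: cdf_def measure_std_normal_lessThan_Int_atMost measure_std_normal_lessThan)
    finally show "cdf (distr unif01 borel (\<lambda>v. Phi_inv (Phi \<theta> * v))) x =
        cdf (uniform_measure std_normal {..<\<theta>}) x" .
  qed
qed

lemma nn_integral_std_normal_lessThan:
  assumes [measurable]: "F \<in> borel_measurable borel"
  shows "(\<integral>\<^sup>+ y. F y * indicator {..<\<theta>} y \<partial>std_normal)
       = ennreal (Phi \<theta>) * (\<integral>\<^sup>+ v. F (Phi_inv (Phi \<theta> * v)) \<partial>unif01)"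
proof -
  let ?p = "ennreal (Phi \<theta>)"
  have p: "?p \<noteq> 0" "?p \<noteq> top"
    using Phi_pos[of \<theta>] by simp_all
  have "(\<integral>\<^sup>+ v. F (Phi_inv (Phi \<theta> * v)) \<partial>unif01)
      = (\<integral>\<^sup>+ y. F y \<partial>distr unif01 borel (\<lambda>v. Phi_inv (Phi \<theta> * v)))"
    by (simp add: nn_integral_distr)
  also have "\<dots> = (\<integral>\<^sup>+ y. F y * indicator {..<\<theta>} y \<partial>std_normal) / ?p"
    by (simp add: distr_Phi_inv_unif01 nn_integral_uniform_measure
        std_normal.emeasure_eq_measure measure_std_normal_lessThan)
  finally have "?p * (\<integral>\<^sup>+ v. F (Phi_inv (Phi \<theta> * v)) \<partial>unif01)
      = ?p * ((\<integral>\<^sup>+ y. F y * indicator {..<\<theta>} y \<partial>std_normal) / ?p)"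
    by simp
  also have "\<dots> = (\<integral>\<^sup>+ y. F y * indicator {..<\<theta>} y \<partial>std_normal)"
    unfolding ennreal_times_divide mult.commute[of ?p] using p by (rule mult_divide_eq_ennreal)
  finally show ?thesis ..
qed

lemma S_path_cong:
  "(\<And>i. i < j \<Longrightarrow> z i = z' i) \<Longrightarrow> S_path S0 mu sig dt z j = S_path S0 mu sig dt z' j"
  by (induction j) auto

lemma S_cond_cong:
  "(\<And>i. i \<in> {1..t} \<Longrightarrow> u i = u' i) \<Longrightarrow> S_cond S0 mu sig dt B u t = S_cond S0 mu sig dt B u' t"
  by (induction t) (auto simp: Let_def)

lemma p_cond_cong:
  "(\<And>i. i \<in> {1..t} \<Longrightarrow> u i = u' i) \<Longrightarrow> p_cond S0 mu sig dt B u t = p_cond S0 mu sig dt B u' t"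
  unfolding p_cond_def by (metis S_cond_cong)

lemma S_cond_Suc:
  "S_cond S0 mu sig dt B u (Suc t) = S_cond S0 mu sig dt B u t *
     exp ((mu - sig\<^sup>2 / 2) * dt + sig * sqrt dt * Phi_inv (p_cond S0 mu sig dt B u t * u (Suc t)))"
  by (simp add: p_cond_def Let_def)

lemma S_cond_pos: "S0 > 0 \<Longrightarrow> S_cond S0 mu sig dt B u t > 0"
  by (induction t) (auto simp: Let_def)

lemma p_cond_nonneg: "0 \<le> p_cond S0 mu sig dt B u t"
  by (simp add: p_cond_def Phi_pos less_imp_le)

lemma p_cond_le_1: "p_cond S0 mu sig dt B u t \<le> 1"
  by (simp add: p_cond_def Phi_less_1 less_imp_le)

lemma measurable_component_borel:
  assumes "i \<in> I" "sets (M i) = sets borel"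
  shows "(\<lambda>z. z i) \<in> borel_measurable (PiM I M)"
  using measurable_component_singleton[OF assms(1), of M]
  unfolding measurable_cong_sets[OF refl assms(2)] .

lemma borel_measurable_S_path:
  assumes "{..<j} \<subseteq> I" "\<And>i. i \<in> I \<Longrightarrow> sets (M i) = sets borel"
  shows "(\<lambda>z. S_path S0 mu sig dt z j) \<in> borel_measurable (PiM I M)"
  using assms(1)
proof (induction j)
  case (Suc j)
  have [measurable]: "(\<lambda>z. z j) \<in> borel_measurable (PiM I M)"
    using Suc.prems by (intro measurable_component_borel assms(2)) auto
  have "{..<j} \<subseteq> I"
    using Suc.prems by auto
  note [measurable] = Suc.IH[OF this]
  show ?case by simp
qed simp

lemma borel_measurable_S_cond:
  assumes "{1..t} \<subseteq> I" "\<And>i. i \<in> I \<Longrightarrow> sets (M i) = sets borel"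
  shows "(\<lambda>u. S_cond S0 mu sig dt B u t) \<in> borel_measurable (PiM I M)"
  using assms(1)
proof (induction t)
  case (Suc t)
  have [measurable]: "(\<lambda>u. u (Suc t)) \<in> borel_measurable (PiM I M)"
    using Suc.prems by (intro measurable_component_borel assms(2)) auto
  have "{1..t} \<subseteq> I"
    using Suc.prems by auto
  note [measurable] = Suc.IH[OF this]
  show ?case unfolding S_cond_Suc p_cond_def by measurable
qed simp

lemma borel_measurable_p_cond:
  assumes "{1..t} \<subseteq> I" "\<And>i. i \<in> I \<Longrightarrow> sets (M i) = sets borel"
  shows "(\<lambda>u. p_cond S0 mu sig dt B u t) \<in> borel_measurable (PiM I M)"
  using borel_measurable_S_cond[OF assms] unfolding p_cond_def by measurable

lemma borel_measurable_prod_p_cond: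
  assumes "{1..n} \<subseteq> I" "\<And>i. i \<in> I \<Longrightarrow> sets (M i) = sets borel"
  shows "(\<lambda>u. \<Prod>i<n. p_cond S0 mu sig dt B u i) \<in> borel_measurable (PiM I M)"
  using assms by (intro borel_measurable_prod borel_measurable_p_cond) auto

section \<open>Survival below the barrier\<close>

interpretation std_normal_seq: product_sigma_finite "\<lambda>_::nat. std_normal"
  by (simp add: product_sigma_finite_def prob_space_std_normal prob_space_imp_sigma_finite)

interpretation unif01_seq: product_sigma_finite "\<lambda>_::nat. unif01"
  by (simp add: product_sigma_finite_def prob_space_unif01 prob_space_imp_sigma_finite)

locale barrier_model =
  fixes mu sig dt S0 B :: real
  assumes dt_pos: "0 < dt" and sig_pos: "0 < sig" and S0_pos: "0 < S0" and B_pos: "0 < B"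
begin

abbreviation drift :: real where
  "drift \<equiv> (mu - sig\<^sup>2 / 2) * dt"

abbreviation vol :: real where
  "vol \<equiv> sig * sqrt dt"

definition barrier_score :: "real \<Rightarrow> real" where
  "barrier_score s = (ln (B / s) - drift) / vol"

lemma p_cond_eq_Phi_barrier_score:
  "p_cond S0 mu sig dt B u t = Phi (barrier_score (S_cond S0 mu sig dt B u t))"
  by (simp add: p_cond_def barrier_score_def)

lemma below_barrier_iff:
  assumes "0 < s" shows "s * exp (drift + vol * y) < B \<longleftrightarrow> y < barrier_score s"
proof -
  have "0 < vol" using dt_pos sig_pos by simp
  have "s * exp (drift + vol * y) < B \<longleftrightarrow> exp (drift + vol * y) < B / s"
    using assms by (simp add: field_simps)
  also have "\<dots> \<longleftrightarrow> exp (drift + vol * y) < exp (ln (B / s))"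
    using assms B_pos by simp
  also have "\<dots> \<longleftrightarrow> drift + vol * y < ln (B / s)"
    by (rule exp_less_cancel_iff)
  also have "\<dots> \<longleftrightarrow> y < barrier_score s"
    using \<open>0 < vol\<close> by (simp add: barrier_score_def field_simps)
  finally show ?thesis .
qed

definition killed_step :: "(real \<Rightarrow> ennreal) \<Rightarrow> real \<Rightarrow> ennreal" where
  "killed_step F s =
     (\<integral>\<^sup>+ y. (if s * exp (drift + vol * y) < B then F (s * exp (drift + vol * y)) else 0) \<partial>std_normal)"

definition conditioned_step :: "(real \<Rightarrow> ennreal) \<Rightarrow> real \<Rightarrow> ennreal" where
  "conditioned_step F s = ennreal (Phi (barrier_score s)) *
     (\<integral>\<^sup>+ v. F (s * exp (drift + vol * Phi_inv (Phi (barrier_score s) * v))) \<partial>unif01)"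

lemma borel_measurable_killed_step [measurable]:
  assumes [measurable]: "F \<in> borel_measurable borel"
  shows "killed_step F \<in> borel_measurable borel"
  unfolding killed_step_def by (rule std_normal.borel_measurable_nn_integral) measurable

lemma killed_step_eq_conditioned_step:
  assumes "0 < s" and [measurable]: "F \<in> borel_measurable borel"
  shows "killed_step F s = conditioned_step F s"
proof -
  have "killed_step F s =
      (\<integral>\<^sup>+ y. F (s * exp (drift + vol * y)) * indicator {..<barrier_score s} y \<partial>std_normal)"
    unfolding killed_step_def
    by (intro nn_integral_cong) (simp add: below_barrier_iff[OF \<open>0 < s\<close>] split: split_indicator)
  also have "\<dots> = conditioned_step F s"
    unfolding conditioned_step_def by (rule nn_integral_std_normal_lessThan) measurable
  finally show ?thesis .
qed

definition survives :: "(nat \<Rightarrow> real) \<Rightarrow> nat \<Rightarrow> bool" where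
  "survives z n \<longleftrightarrow> (\<forall>j\<in>{1..n}. S_path S0 mu sig dt z j < B)"

lemma survives_Suc:
  "survives z (Suc n) \<longleftrightarrow> survives z n \<and> S_path S0 mu sig dt z (Suc n) < B"
  by (auto simp: survives_def le_Suc_eq simp del: S_path.simps)

lemma survives_cong:
  "(\<And>i. i < n \<Longrightarrow> z i = z' i) \<Longrightarrow> survives z n \<longleftrightarrow> survives z' n"
  unfolding survives_def by (metis (no_types, lifting) S_path_cong atLeastAtMost_iff order_less_le_trans)

lemma measurable_survives:
  assumes "{..<n} \<subseteq> I" "\<And>i. i \<in> I \<Longrightarrow> sets (M i) = sets borel"
  shows "Measurable.pred (PiM I M) (\<lambda>z. survives z n)"
proof -
  have [measurable]: "(\<lambda>z. S_path S0 mu sig dt z j) \<in> borel_measurable (PiM I M)" if "j \<in> {1..n}" for j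
    using that assms by (intro borel_measurable_S_path) auto
  show ?thesis unfolding survives_def by measurable
qed

lemma nn_integral_survives_Suc:
  assumes [measurable]: "F \<in> borel_measurable borel"
  shows "(\<integral>\<^sup>+ z. (if survives z (Suc n) then F (S_path S0 mu sig dt z (Suc n)) else 0)
            \<partial>PiM {..<Suc n} (\<lambda>_. std_normal))
       = (\<integral>\<^sup>+ z. (if survives z n then killed_step F (S_path S0 mu sig dt z n) else 0)
            \<partial>PiM {..<n} (\<lambda>_. std_normal))"
proof -
  let ?S = "S_path S0 mu sig dt"
  have [measurable]: "(\<lambda>z. ?S z (Suc n)) \<in> borel_measurable (PiM (insert n {..<n}) (\<lambda>_. std_normal))"
    by (intro borel_measurable_S_path) auto
  have [measurable]: "Measurable.pred (PiM (insert n {..<n}) (\<lambda>_. std_normal)) (\<lambda>z. survives z (Suc n))"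
    by (intro measurable_survives) auto
  have "(\<integral>\<^sup>+ z. (if survives z (Suc n) then F (?S z (Suc n)) else 0) \<partial>PiM {..<Suc n} (\<lambda>_. std_normal))
      = (\<integral>\<^sup>+ z. \<integral>\<^sup>+ y. (if survives (z(n := y)) (Suc n) then F (?S (z(n := y)) (Suc n)) else 0)
           \<partial>std_normal \<partial>PiM {..<n} (\<lambda>_. std_normal))"
    unfolding lessThan_Suc by (rule std_normal_seq.product_nn_integral_insert) auto
  also have "\<dots> = (\<integral>\<^sup>+ z. (if survives z n then killed_step F (?S z n) else 0) \<partial>PiM {..<n} (\<lambda>_. std_normal))"
  proof (intro nn_integral_cong)
    fix z
    have prefix: "?S (z(n := y)) j = ?S z j" if "j \<le> n" for j y
      using that by (intro S_path_cong) auto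
    have last: "?S (z(n := y)) (Suc n) = ?S z n * exp (drift + vol * y)" for y
      using prefix[of n y] by simp
    have survives_prefix: "survives (z(n := y)) n = survives z n" for y
      by (intro survives_cong) auto
    show "(\<integral>\<^sup>+ y. (if survives (z(n := y)) (Suc n) then F (?S (z(n := y)) (Suc n)) else 0) \<partial>std_normal)
        = (if survives z n then killed_step F (?S z n) else 0)"
      unfolding survives_Suc survives_prefix last killed_step_def by simp
  qed
  finally show ?thesis .
qed

lemma nn_integral_conditioned_Suc:
  assumes [measurable]: "F \<in> borel_measurable borel"
  shows "(\<integral>\<^sup>+ u. ennreal (\<Prod>i<Suc n. p_cond S0 mu sig dt B u i) * F (S_cond S0 mu sig dt B u (Suc n))
            \<partial>PiM {1..Suc n} (\<lambda>_. unif01))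
       = (\<integral>\<^sup>+ u. ennreal (\<Prod>i<n. p_cond S0 mu sig dt B u i) * conditioned_step F (S_cond S0 mu sig dt B u n)
            \<partial>PiM {1..n} (\<lambda>_. unif01))"
proof -
  let ?S = "S_cond S0 mu sig dt B" and ?p = "p_cond S0 mu sig dt B"
  have [measurable]:
      "(\<lambda>u. \<Prod>i<Suc n. ?p u i) \<in> borel_measurable (PiM (insert (Suc n) {1..n}) (\<lambda>_. unif01))"
      "(\<lambda>u. ?S u (Suc n)) \<in> borel_measurable (PiM (insert (Suc n) {1..n}) (\<lambda>_. unif01))"
    by (intro borel_measurable_prod_p_cond borel_measurable_S_cond; auto)+
  have integrand: "(\<lambda>u. ennreal (\<Prod>i<Suc n. ?p u i) * F (?S u (Suc n)))
      \<in> borel_measurable (PiM (insert (Suc n) {1..n}) (\<lambda>_. unif01))"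
    by measurable
  have "{1..Suc n} = insert (Suc n) {1..n}" by auto
  then have "(\<integral>\<^sup>+ u. ennreal (\<Prod>i<Suc n. ?p u i) * F (?S u (Suc n)) \<partial>PiM {1..Suc n} (\<lambda>_. unif01))
      = (\<integral>\<^sup>+ u. \<integral>\<^sup>+ v. ennreal (\<Prod>i<Suc n. ?p (u(Suc n := v)) i) * F (?S (u(Suc n := v)) (Suc n))
           \<partial>unif01 \<partial>PiM {1..n} (\<lambda>_. unif01))"
    by (simp only:) (rule unif01_seq.product_nn_integral_insert[OF _ _ integrand]; simp)
  also have "\<dots> = (\<integral>\<^sup>+ u. ennreal (\<Prod>i<n. ?p u i) * conditioned_step F (?S u n) \<partial>PiM {1..n} (\<lambda>_. unif01))"
  proof (intro nn_integral_cong)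
    fix u
    have prefix: "?p (u(Suc n := v)) i = ?p u i" "?S (u(Suc n := v)) i = ?S u i" if "i \<le> n" for i v
      using that by (intro p_cond_cong S_cond_cong; auto)+
    have "(\<integral>\<^sup>+ v. ennreal (\<Prod>i<Suc n. ?p (u(Suc n := v)) i) * F (?S (u(Suc n := v)) (Suc n)) \<partial>unif01)
        = (\<integral>\<^sup>+ v. ennreal (\<Prod>i<n. ?p u i) * (ennreal (?p u n) *
             F (?S u n * exp (drift + vol * Phi_inv (?p u n * v)))) \<partial>unif01)"
      by (intro nn_integral_cong)
        (simp add: prefix S_cond_Suc ennreal_mult prod_nonneg p_cond_nonneg mult.assoc del: S_cond.simps)
    also have "\<dots> = ennreal (\<Prod>i<n. ?p u i) * conditioned_step F (?S u n)"
      by (simp add: nn_integral_cmult conditioned_step_def p_cond_eq_Phi_barrier_score)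
    finally show "(\<integral>\<^sup>+ v. ennreal (\<Prod>i<Suc n. ?p (u(Suc n := v)) i) * F (?S (u(Suc n := v)) (Suc n)) \<partial>unif01)
        = ennreal (\<Prod>i<n. ?p u i) * conditioned_step F (?S u n)" .
  qed
  finally show ?thesis .
qed

text \<open>The arbitrary test function F of the current price is what makes the induction go through.\<close>

theorem nn_integral_survives:
  assumes "F \<in> borel_measurable borel"
  shows "(\<integral>\<^sup>+ z. (if survives z n then F (S_path S0 mu sig dt z n) else 0) \<partial>PiM {..<n} (\<lambda>_. std_normal))
       = (\<integral>\<^sup>+ u. ennreal (\<Prod>i<n. p_cond S0 mu sig dt B u i) * F (S_cond S0 mu sig dt B u n)
            \<partial>PiM {1..n} (\<lambda>_. unif01))"
  using assms
proof (induction n arbitrary: F)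
  case 0
  then show ?case by (simp add: survives_def PiM_empty)
next
  case (Suc n)
  note [measurable] = Suc.prems
  have "(\<integral>\<^sup>+ z. (if survives z (Suc n) then F (S_path S0 mu sig dt z (Suc n)) else 0)
           \<partial>PiM {..<Suc n} (\<lambda>_. std_normal))
      = (\<integral>\<^sup>+ u. ennreal (\<Prod>i<n. p_cond S0 mu sig dt B u i) * killed_step F (S_cond S0 mu sig dt B u n)
           \<partial>PiM {1..n} (\<lambda>_. unif01))"
    by (simp add: nn_integral_survives_Suc Suc.IH)
  also have "\<dots> = (\<integral>\<^sup>+ u. ennreal (\<Prod>i<n. p_cond S0 mu sig dt B u i) * conditioned_step F (S_cond S0 mu sig dt B u n)
           \<partial>PiM {1..n} (\<lambda>_. unif01))"
    by (simp add: killed_step_eq_conditioned_step S_cond_pos S0_pos)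
  also have "\<dots> = (\<integral>\<^sup>+ u. ennreal (\<Prod>i<Suc n. p_cond S0 mu sig dt B u i) * F (S_cond S0 mu sig dt B u (Suc n))
           \<partial>PiM {1..Suc n} (\<lambda>_. unif01))"
    using Suc.prems by (rule nn_integral_conditioned_Suc[symmetric])
  finally show ?case .
qed

lemma integrable_prod_p_cond:
  "integrable (PiM {1..n} (\<lambda>_. unif01)) (\<lambda>u. \<Prod>i<n. p_cond S0 mu sig dt B u i)"
proof -
  interpret PU: prob_space "PiM {1..n} (\<lambda>_. unif01)"
    by (intro prob_space_PiM prob_space_unif01)
  show ?thesis
    by (intro PU.integrable_const_bound[where B = 1] borel_measurable_prod_p_cond AE_I2)
      (auto simp: prod_nonneg prod_le_1 p_cond_nonneg p_cond_le_1)
qed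

lemma prob_survives:
  "measure (PiM {..<n} (\<lambda>_. std_normal)) {z \<in> space (PiM {..<n} (\<lambda>_. std_normal)). survives z n}
     = (\<integral> u. (\<Prod>i<n. p_cond S0 mu sig dt B u i) \<partial>PiM {1..n} (\<lambda>_. unif01))"
proof -
  let ?PN = "PiM {..<n} (\<lambda>_. std_normal)" and ?PU = "PiM {1..n} (\<lambda>_. unif01)"
  let ?q = "\<lambda>u. \<Prod>i<n. p_cond S0 mu sig dt B u i"
  interpret PN: prob_space ?PN by (intro prob_space_PiM prob_space_std_normal)
  interpret PU: prob_space ?PU by (intro prob_space_PiM prob_space_unif01)
  have [measurable]: "Measurable.pred ?PN (\<lambda>z. survives z n)"
    by (intro measurable_survives) auto
  have q_bounds: "0 \<le> ?q u" "?q u \<le> 1" for u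
    by (simp_all add: prod_nonneg prod_le_1 p_cond_nonneg p_cond_le_1)
  have "{z \<in> space ?PN. survives z n} \<in> sets ?PN"
    by measurable
  then have "emeasure ?PN {z \<in> space ?PN. survives z n}
      = (\<integral>\<^sup>+ z. indicator {z \<in> space ?PN. survives z n} z \<partial>?PN)"
    by simp
  also have "\<dots> = (\<integral>\<^sup>+ z. (if survives z n then 1 else 0) \<partial>?PN)"
    by (intro nn_integral_cong) (simp split: split_indicator)
  also have "\<dots> = (\<integral>\<^sup>+ u. ennreal (?q u) \<partial>?PU)"
    using nn_integral_survives[of "\<lambda>_. 1" n] by simp
  also have "\<dots> = ennreal (\<integral> u. ?q u \<partial>?PU)"
    using q_bounds integrable_prod_p_cond by (intro nn_integral_eq_integral) auto
  finally show ?thesis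
    using q_bounds by (simp add: PN.emeasure_eq_measure integral_nonneg)
qed

lemma knock_in_payoff_S_path:
  "knock_in_payoff n B c (S_path S0 mu sig dt z) = (if survives z n then 0 else c)"
  by (auto simp: knock_in_payoff_def survives_def not_le)

end

section \<open>Independent standard normal increments\<close>

lemma (in prob_space) distr_indep_std_normal:
  assumes "indep_vars (\<lambda>_. borel) Z I"
    and "\<And>i. i \<in> I \<Longrightarrow> distributed M lborel (Z i) (\<lambda>x. ennreal (std_normal_density x))"
  shows "distr M (PiM I (\<lambda>_. std_normal)) (\<lambda>\<omega>. \<lambda>i\<in>I. Z i \<omega>) = PiM I (\<lambda>_. std_normal)"
proof (cases "I = {}")
  case True
  then show ?thesis
    by (intro measure_eqI) (auto simp: PiM_empty restrict_def subset_singleton_iff)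
next
  case False
  have Z_borel: "random_variable borel (Z i)" if "i \<in> I" for i
    using distributed_measurable[OF assms(2)[OF that]] by simp
  have "distr M (PiM I (\<lambda>_. std_normal)) (\<lambda>\<omega>. \<lambda>i\<in>I. Z i \<omega>)
      = distr M (PiM I (\<lambda>_. borel)) (\<lambda>\<omega>. \<lambda>i\<in>I. Z i \<omega>)"
    by (intro distr_cong sets_PiM_cong) simp_all
  also have "\<dots> = PiM I (\<lambda>i. distr M borel (Z i))"
    using indep_vars_iff_distr_eq_PiM'[OF False Z_borel] assms(1) by simp
  also have "\<dots> = PiM I (\<lambda>_. std_normal)"
  proof (intro PiM_cong refl)
    fix i assume "i \<in> I"
    have "distr M borel (Z i) = distr M lborel (Z i)"
      by (intro distr_cong) simp_all
    also have "\<dots> = std_normal"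
      using distributed_distr_eq_density[OF assms(2)[OF \<open>i \<in> I\<close>]] .
    finally show "distr M borel (Z i) = std_normal" .
  qed
  finally show ?thesis .
qed

lemma (in prob_space) expectation_indep_std_normal:
  fixes Z :: "'i \<Rightarrow> 'a \<Rightarrow> real" and f :: "('i \<Rightarrow> real) \<Rightarrow> real"
  assumes "indep_vars (\<lambda>_. borel) Z I"
    and "\<And>i. i \<in> I \<Longrightarrow> distributed M lborel (Z i) (\<lambda>x. ennreal (std_normal_density x))"
    and "f \<in> borel_measurable (PiM I (\<lambda>_. std_normal))"
  shows "expectation (\<lambda>\<omega>. f (\<lambda>i\<in>I. Z i \<omega>)) = (\<integral> z. f z \<partial>PiM I (\<lambda>_. std_normal))"
proof -
  have "(\<lambda>\<omega>. \<lambda>i\<in>I. Z i \<omega>) \<in> measurable M (PiM I (\<lambda>_. std_normal))"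
    using distributed_measurable[OF assms(2)] by (intro measurable_restrict) simp
  then have "expectation (\<lambda>\<omega>. f (\<lambda>i\<in>I. Z i \<omega>))
      = (\<integral> z. f z \<partial>distr M (PiM I (\<lambda>_. std_normal)) (\<lambda>\<omega>. \<lambda>i\<in>I. Z i \<omega>))"
    by (rule integral_distr[symmetric, OF _ assms(3)])
  then show ?thesis
    by (simp add: distr_indep_std_normal[OF assms(1,2)])
qed

lemma (in prob_space) expectation_if_then_zero:
  assumes [measurable]: "Measurable.pred M P"
  shows "expectation (\<lambda>x. if P x then 0 else c) = c * (1 - prob {x \<in> space M. P x})"
proof -
  have "expectation (\<lambda>x. if P x then 0 else c) = expectation (\<lambda>x. c * indicator {x \<in> space M. \<not> P x} x)"
    by (intro Bochner_Integration.integral_cong) (auto split: split_indicator)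
  also have "\<dots> = c * prob {x \<in> space M. \<not> P x}"
    by (simp add: Int_absorb2[OF Collect_subset])
  also have "\<dots> = c * (1 - prob {x \<in> space M. P x})"
    by (subst prob_neg) simp_all
  finally show ?thesis .
qed

lemma sum_prod_mult_one_minus:
  fixes p :: "nat \<Rightarrow> 'a::comm_ring_1"
  shows "(\<Sum>k<n. (\<Prod>i<k. p i) * (1 - p k)) = 1 - (\<Prod>i<n. p i)"
  by (induction n) (simp_all add: algebra_simps)

theorem theorem2p9:
  fixes T :: nat and dt r mu sig S0 B c :: real
    and M :: "'a measure" and Z :: "nat \<Rightarrow> 'a \<Rightarrow> real"
  assumes "dt > 0" and "sig > 0" and "S0 > 0" and "B > 0"
    and "prob_space M"
    and "prob_space.indep_vars M (\<lambda>_. borel) Z {..<T}"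
    and "\<And>j. j < T \<Longrightarrow> distributed M lborel (Z j) (\<lambda>x. ennreal (std_normal_density x))"
  shows "exp (- r * real T * dt) *
           prob_space.expectation M
             (\<lambda>\<omega>. knock_in_payoff T B c (S_path S0 mu sig dt (\<lambda>j. Z j \<omega>)))
       = exp (- r * real T * dt) *
           integral\<^sup>L (PiM {1..T} (\<lambda>_. uniform_measure lborel {0..1::real}))
             (\<lambda>u. c * (\<Sum>k<T. (\<Prod>i<k. p_cond S0 mu sig dt B u i)
                                * (1 - p_cond S0 mu sig dt B u k)))"
proof -
  interpret prob_space M by fact
  interpret barrier_model mu sig dt S0 B
    using assms(1-4) by unfold_locales
  let ?PN = "PiM {..<T} (\<lambda>_. std_normal)" and ?PU = "PiM {1..T} (\<lambda>_. unif01)"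
  let ?q = "\<lambda>u. \<Prod>i<T. p_cond S0 mu sig dt B u i"
  interpret PN: prob_space ?PN by (intro prob_space_PiM prob_space_std_normal)
  interpret PU: prob_space ?PU by (intro prob_space_PiM prob_space_unif01)
  have [measurable]: "Measurable.pred ?PN (\<lambda>z. survives z T)"
    by (intro measurable_survives) auto
  have "expectation (\<lambda>\<omega>. knock_in_payoff T B c (S_path S0 mu sig dt (\<lambda>j. Z j \<omega>)))
      = expectation (\<lambda>\<omega>. (\<lambda>z. if survives z T then 0 else c) (\<lambda>j\<in>{..<T}. Z j \<omega>))"
    unfolding knock_in_payoff_S_path by (intro Bochner_Integration.integral_cong refl) (simp cong: survives_cong)
  also have "\<dots> = (\<integral> z. (if survives z T then 0 else c) \<partial>?PN)"
    using assms(6,7) by (intro expectation_indep_std_normal) auto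
  also have "\<dots> = c - c * (\<integral> u. ?q u \<partial>?PU)"
    by (simp add: PN.expectation_if_then_zero prob_survives algebra_simps)
  also have "\<dots> = (\<integral> u. c - c * ?q u \<partial>?PU)"
    using integrable_prod_p_cond[of T] PU.integrable_const[of c] PU.prob_space
    by (subst Bochner_Integration.integral_diff) auto
  also have "\<dots> = (\<integral> u. c * (\<Sum>k<T. (\<Prod>i<k. p_cond S0 mu sig dt B u i) * (1 - p_cond S0 mu sig dt B u k)) \<partial>?PU)"
    unfolding sum_prod_mult_one_minus by (simp add: right_diff_distrib)
  finally show ?thesis by simp
qed

end
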